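(* Let $2\le k\le d$ and let $P\subset\mathbb{R}^d$ be a finite point set with properties $a_1,\dots,a_k\colon P\to\{-1,1\}$, each strictly linearly separable on $P$, such that all $2^k$ possible labels occur in $P$. For $i=2,\dots,k$ let $H_i$ be a hyperplane strictly separating $P^i_-$ from $P^i_+$, with normal vector $v_i$. Assume general position in the following sense: $v_2,\dots,v_k$ are linearly independent; any at most $d+1$ points of $P$ are affinely independent; and, writing $T$ for the orthogonal projection of $\mathbb{R}^d$ onto $A=\mathrm{span}(v_2,\dots,v_k)$, the images under $T$ of any at most $k$ points of $P$ are affinely independent. Then there is a unit vector $w$ with $w\cdot v_i=0$ for all $i=2,\dots,k$ (a separation preserving projection) such that, after projecting along $w$, the sets $P'_-$ and $P'_+$ are not strictly linearly separable.
   Context: For a finite $P\subset\mathbb{R}^d$ with properties $a_i\colon P\to\{-1,1\}$, write $P^i_{\pm}=\{p\in P: a_i(p)=\pm1\}$ and $P_\pm=P^1_\pm$. The label of $p$ is $(a_1(p),\dots,a_k(p))$. Projection along a unit vector $w$: $p'=p-(p\cdot w)w\in w^\perp$; $X'$ is the image of $X$. Two finite sets $X,Y$ in a linear subspace $L$ are strictly linearly separable (in $L$) if there exist a unit $v\in L$ and $c$ with $v\cdot x<c<v\cdot y$ for all $x\in X,y\in Y$; for projected sets $L=w^\perp$. A property $a_i$ is strictly linearly separable on $P$ if $P^i_-$ and $P^i_+$ are. A projection along $w$ is called separation preserving (with respect to the fixed hyperplanes $H_2,\dots,H_k$) if $w$ is orthogonal to all normals $v_2,\dots,v_k$. *)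

theory Defs
  imports "HOL-Analysis.Analysis"
begin

definition proj_along :: "'a::euclidean_space \<Rightarrow> 'a \<Rightarrow> 'a" where
  "proj_along w p = p - (p \<bullet> w) *\<^sub>R w"

definition strictly_lin_sep_in :: "'a::euclidean_space set \<Rightarrow> 'a set \<Rightarrow> 'a set \<Rightarrow> bool" where
  "strictly_lin_sep_in L X Y \<longleftrightarrow>
     (\<exists>v c. v \<in> L \<and> norm v = 1 \<and> (\<forall>x\<in>X. v \<bullet> x < c) \<and> (\<forall>y\<in>Y. c < v \<bullet> y))"

definition orth_proj_span :: "'a::euclidean_space set \<Rightarrow> 'a \<Rightarrow> 'a" where
  "orth_proj_span V x = (THE y. y \<in> span V \<and> (\<forall>z\<in>span V. (x - y) \<bullet> z = 0))"

end

theory Submission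
  imports Defs
begin

text \<open>Let K = conv P_- - conv P_+ and let N be the orthogonal complement of
A = span(v_2, ..., v_k). If K meets N in z, then z is nonzero (a_1 is separable), orthogonal to
every v_i, and after projecting along z a point of conv P_- coincides with a point of conv P_+,
so the projected classes cannot be separated. Otherwise 0 is not in the closed convex set K + N,
and a functional u separating it from 0 must vanish on N, i.e. u = sum lambda_i v_i lies in A.\<close>

lemma strict_sep_convex_hulls:
  fixes u :: "'a::euclidean_space"
  assumes "\<forall>x\<in>X. u \<bullet> x < e" "\<forall>y\<in>Y. e < u \<bullet> y"
    and "x \<in> convex hull X" "y \<in> convex hull Y"
  shows "u \<bullet> x < u \<bullet> y"
proof -
  have "convex hull X \<subseteq> {x. u \<bullet> x < e}"
    by (rule hull_minimal) (use assms(1) convex_halfspace_lt in auto)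
  moreover have "convex hull Y \<subseteq> {y. e < u \<bullet> y}"
    by (rule hull_minimal) (use assms(2) convex_halfspace_gt in auto)
  ultimately show ?thesis
    using assms(3,4) by fastforce
qed

lemma inner_proj_along_orthogonal:
  assumes "u \<bullet> w = 0"
  shows "u \<bullet> proj_along w p = u \<bullet> p"
  using assms by (simp add: proj_along_def inner_diff_right inner_commute)

lemma not_strictly_lin_sep_proj_along:
  assumes "x \<in> convex hull X" "y \<in> convex hull Y" "x - y = t *\<^sub>R w"
  shows "\<not> strictly_lin_sep_in {z. z \<bullet> w = 0} (proj_along w ` X) (proj_along w ` Y)"
proof
  assume "strictly_lin_sep_in {z. z \<bullet> w = 0} (proj_along w ` X) (proj_along w ` Y)"
  then obtain u e where u: "u \<bullet> w = 0"
      and "\<forall>x\<in>proj_along w ` X. u \<bullet> x < e" "\<forall>y\<in>proj_along w ` Y. e < u \<bullet> y"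
    unfolding strictly_lin_sep_in_def by auto
  then have "\<forall>x\<in>X. u \<bullet> x < e" "\<forall>y\<in>Y. e < u \<bullet> y"
    by (auto simp: inner_proj_along_orthogonal)
  then have "u \<bullet> (x - y) < 0"
    using strict_sep_convex_hulls assms(1,2) by (fastforce simp: inner_diff_right)
  moreover have "u \<bullet> (x - y) = 0"
    using u by (simp add: assms(3))
  ultimately show False
    by simp
qed

lemma orthogonal_comp_if_bounded_below_on_translate:
  assumes "subspace N" "\<forall>n\<in>N. b < u \<bullet> (z + n)"
  shows "u \<in> N\<^sup>\<bottom>"
  unfolding orthogonal_comp_def orthogonal_def
proof (intro CollectI ballI)
  fix n
  assume "n \<in> N"
  show "n \<bullet> u = 0"
  proof (rule ccontr)
    assume "n \<bullet> u \<noteq> 0"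
    define t where "t = (b - u \<bullet> z) / (u \<bullet> n)"
    have "t *\<^sub>R n \<in> N"
      using assms(1) \<open>n \<in> N\<close> by (simp add: subspace_scale)
    then have "b < u \<bullet> (z + t *\<^sub>R n)"
      using assms(2) by blast
    moreover have "u \<bullet> (z + t *\<^sub>R n) = b"
      using \<open>n \<bullet> u \<noteq> 0\<close> by (simp add: t_def inner_add_right inner_commute)
    ultimately show False
      by simp
  qed
qed

lemma convex_hull_differences_meet_subspace_or_separated:
  fixes X Y :: "'a::euclidean_space set"
  assumes "compact X" "compact Y" "X \<noteq> {}" "Y \<noteq> {}" "subspace N"
  obtains x y where "x \<in> convex hull X" "y \<in> convex hull Y" "x - y \<in> N"
  | u where "u \<in> N\<^sup>\<bottom>" "\<forall>x\<in>X. \<forall>y\<in>Y. u \<bullet> y < u \<bullet> x"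
proof -
  define K where "K = (\<Union>x\<in>convex hull X. \<Union>y\<in>convex hull Y. {x - y})"
  define B where "B = (\<Union>z\<in>K. \<Union>n\<in>N. {z + n})"
  have diff_plus_in_B: "x - y + n \<in> B" if "x \<in> X" "y \<in> Y" "n \<in> N" for x y n
  proof -
    have "x - y \<in> K"
      unfolding K_def using that(1,2) hull_subset[of X] hull_subset[of Y] by blast
    then show ?thesis
      unfolding B_def using that(3) by blast
  qed
  show thesis
  proof (cases "0 \<in> B")
    case True
    then obtain x y n where "x \<in> convex hull X" "y \<in> convex hull Y" "n \<in> N" "0 = x - y + n"
      unfolding B_def K_def by blast
    moreover from calculation have "x - y \<in> N"
      using assms(5) by (metis add_eq_0_iff subspace_neg eq_neg_iff_add_eq_0)
    ultimately show thesis
      using that(1) by blast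
  next
    case False
    have "compact K"
      unfolding K_def using assms(1,2) by (intro compact_differences' compact_convex_hull)
    then have "closed B"
      unfolding B_def by (rule compact_closed_sums[OF _ closed_subspace[OF assms(5)]])
    moreover have "convex B"
      unfolding B_def K_def
      by (intro convex_sums convex_differences convex_convex_hull subspace_imp_convex assms(5))
    ultimately obtain u b where "0 < b" and u: "\<forall>z\<in>B. b < u \<bullet> z"
      using separating_hyperplane_closed_0 False by blast
    obtain x0 y0 where "x0 \<in> X" "y0 \<in> Y"
      using assms(3,4) by blast
    have "\<forall>n\<in>N. b < u \<bullet> (x0 - y0 + n)"
      using u diff_plus_in_B[OF \<open>x0 \<in> X\<close> \<open>y0 \<in> Y\<close>] by blast
    then have "u \<in> N\<^sup>\<bottom>"
      by (rule orthogonal_comp_if_bounded_below_on_translate[OF assms(5)])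
    moreover have "u \<bullet> y < u \<bullet> x" if "x \<in> X" "y \<in> Y" for x y
    proof -
      have "b < u \<bullet> (x - y + 0)"
        using u diff_plus_in_B[OF that subspace_0[OF assms(5)]] by blast
      then show ?thesis
        using \<open>0 < b\<close> by (simp add: inner_diff_right)
    qed
    ultimately show thesis
      using that(2) by blast
  qed
qed

lemma span_image_sum_representation:
  assumes "finite I" "inj_on v I" "u \<in> span (v ` I)"
  obtains lam where "u = (\<Sum>i\<in>I. lam i *\<^sub>R v i)"
proof -
  obtain f where "u = (\<Sum>x\<in>v ` I. f x *\<^sub>R x)"
    using assms(1,3) span_finite[of "v ` I"] by auto
  then have "u = (\<Sum>i\<in>I. f (v i) *\<^sub>R v i)"
    using assms(2) by (simp add: sum.reindex)
  then show thesis
    by (rule that)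
qed

lemma inner_sum_le_if_labels_against_signs:
  fixes a :: "'i \<Rightarrow> 'a::real_inner \<Rightarrow> int" and lam :: "'i \<Rightarrow> real"
  assumes H: "\<forall>i\<in>I. \<forall>p\<in>P. (a i p = -1 \<longrightarrow> v i \<bullet> p < c i) \<and> (a i p = 1 \<longrightarrow> c i < v i \<bullet> p)"
    and "p \<in> P" "q \<in> P"
    and p_labels: "\<forall>i\<in>I. a i p = (if 0 \<le> lam i then -1 else 1)"
    and q_labels: "\<forall>i\<in>I. a i q = - a i p"
  shows "(\<Sum>i\<in>I. lam i *\<^sub>R v i) \<bullet> p \<le> (\<Sum>i\<in>I. lam i *\<^sub>R v i) \<bullet> q"
  unfolding inner_sum_left
proof (rule sum_mono)
  fix i
  assume "i \<in> I"
  have Hp: "(a i p = -1 \<longrightarrow> v i \<bullet> p < c i) \<and> (a i p = 1 \<longrightarrow> c i < v i \<bullet> p)"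
    and Hq: "(a i q = -1 \<longrightarrow> v i \<bullet> q < c i) \<and> (a i q = 1 \<longrightarrow> c i < v i \<bullet> q)"
    using H \<open>i \<in> I\<close> \<open>p \<in> P\<close> \<open>q \<in> P\<close> by blast+
  have ap: "a i p = (if 0 \<le> lam i then -1 else 1)" and aq: "a i q = - a i p"
    using p_labels q_labels \<open>i \<in> I\<close> by blast+
  show "(lam i *\<^sub>R v i) \<bullet> p \<le> (lam i *\<^sub>R v i) \<bullet> q"
  proof (cases "0 \<le> lam i")
    case True
    then have "v i \<bullet> p \<le> v i \<bullet> q"
      using Hp Hq ap aq by simp
    then show ?thesis
      using True by (simp add: mult_left_mono)
  next
    case False
    then have "v i \<bullet> q \<le> v i \<bullet> p"
      using Hp Hq ap aq by simp
    then show ?thesis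
      using False by (simp add: mult_left_mono_neg)
  qed
qed

lemma labelled_pair_not_separated_by_span:
  fixes a :: "nat \<Rightarrow> 'a::real_inner \<Rightarrow> int"
  assumes "1 \<le> k"
    and labels: "\<And>l. (\<forall>i\<in>{1..k}. l i \<in> {-1::int, 1}) \<Longrightarrow> (\<exists>p\<in>P. \<forall>i\<in>{1..k}. a i p = l i)"
    and H_sep: "\<And>i. i \<in> {2..k} \<Longrightarrow>
        (\<forall>p\<in>P. a i p = -1 \<longrightarrow> v i \<bullet> p < c i) \<and> (\<forall>p\<in>P. a i p = 1 \<longrightarrow> c i < v i \<bullet> p)"
    and "inj_on v {2..k}" "u \<in> span (v ` {2..k})"
  obtains p q where "p \<in> P" "q \<in> P" "a 1 p = -1" "a 1 q = 1" "u \<bullet> p \<le> u \<bullet> q"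
proof -
  obtain lam where u: "u = (\<Sum>i\<in>{2..k}. lam i *\<^sub>R v i)"
    using span_image_sum_representation assms(4,5) by blast
  define s where "s i = (if 0 \<le> lam i then -1 else 1 :: int)" for i
  have "\<forall>i\<in>{1..k}. (if i = 1 then -1 else s i) \<in> {-1, 1}"
    by (simp add: s_def)
  then obtain p where "p \<in> P" and p_labels: "\<forall>i\<in>{1..k}. a i p = (if i = 1 then -1 else s i)"
    using labels[of "\<lambda>i. if i = 1 then -1 else s i"] by blast
  have "\<forall>i\<in>{1..k}. (if i = 1 then 1 else - s i) \<in> {-1, 1}"
    by (simp add: s_def)
  then obtain q where "q \<in> P" and q_labels: "\<forall>i\<in>{1..k}. a i q = (if i = 1 then 1 else - s i)"
    using labels[of "\<lambda>i. if i = 1 then 1 else - s i"] by blast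
  have "u \<bullet> p \<le> u \<bullet> q"
    unfolding u
  proof (rule inner_sum_le_if_labels_against_signs[OF _ \<open>p \<in> P\<close> \<open>q \<in> P\<close>])
    show "\<forall>i\<in>{2..k}. \<forall>p\<in>P. (a i p = -1 \<longrightarrow> v i \<bullet> p < c i) \<and> (a i p = 1 \<longrightarrow> c i < v i \<bullet> p)"
      using H_sep by blast
    show "\<forall>i\<in>{2..k}. a i p = (if 0 \<le> lam i then -1 else 1)"
      using p_labels by (auto simp: s_def)
    show "\<forall>i\<in>{2..k}. a i q = - a i p"
      using p_labels q_labels by auto
  qed
  moreover have "a 1 p = -1" "a 1 q = 1"
    using p_labels q_labels \<open>1 \<le> k\<close> by simp_all
  ultimately show thesis
    using that \<open>p \<in> P\<close> \<open>q \<in> P\<close> by blast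
qed

theorem mainTheorem3:
  fixes P :: "'a::euclidean_space set"
    and k :: nat
    and a :: "nat \<Rightarrow> 'a \<Rightarrow> int"
    and v :: "nat \<Rightarrow> 'a"
    and c :: "nat \<Rightarrow> real"
  assumes k_bounds: "2 \<le> k" "k \<le> DIM('a)"
    and finP: "finite P"
    and a_vals: "\<And>i p. i \<in> {1..k} \<Longrightarrow> p \<in> P \<Longrightarrow> a i p \<in> {-1, 1}"
    and a_sep: "\<And>i. i \<in> {1..k} \<Longrightarrow>
        strictly_lin_sep_in UNIV {p\<in>P. a i p = -1} {p\<in>P. a i p = 1}"
    and labels: "\<And>l. (\<forall>i\<in>{1..k}. l i \<in> {-1::int, 1}) \<Longrightarrow>
        (\<exists>p\<in>P. \<forall>i\<in>{1..k}. a i p = l i)"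
    and H_sep: "\<And>i. i \<in> {2..k} \<Longrightarrow>
        (\<forall>p\<in>P. a i p = -1 \<longrightarrow> v i \<bullet> p < c i) \<and> (\<forall>p\<in>P. a i p = 1 \<longrightarrow> c i < v i \<bullet> p)"
    and v_indep: "inj_on v {2..k}" "independent (v ` {2..k})"
    and P_gen: "\<And>S. S \<subseteq> P \<Longrightarrow> card S \<le> DIM('a) + 1 \<Longrightarrow> \<not> affine_dependent S"
    and T_gen: "\<And>S. S \<subseteq> P \<Longrightarrow> card S \<le> k \<Longrightarrow>
        inj_on (orth_proj_span (v ` {2..k})) S \<and>
        \<not> affine_dependent (orth_proj_span (v ` {2..k}) ` S)"
  shows "\<exists>w. norm w = 1 \<and> (\<forall>i\<in>{2..k}. w \<bullet> v i = 0) \<and>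
     \<not> strictly_lin_sep_in {x. x \<bullet> w = 0}
         (proj_along w ` {p\<in>P. a 1 p = -1}) (proj_along w ` {p\<in>P. a 1 p = 1})"
proof -
  define V where "V = v ` {2..k}"
  define Pm where "Pm = {p\<in>P. a 1 p = -1}"
  define Pp where "Pp = {p\<in>P. a 1 p = 1}"
  have one: "(1::nat) \<in> {1..k}"
    using k_bounds by simp
  have "Pm \<noteq> {}" "Pp \<noteq> {}"
    using labels[of "\<lambda>_. -1"] labels[of "\<lambda>_. 1"] one by (fastforce simp: Pm_def Pp_def)+
  moreover have "compact Pm" "compact Pp"
    using finP by (simp_all add: Pm_def Pp_def finite_imp_compact)
  ultimately consider x y where "x \<in> convex hull Pm" "y \<in> convex hull Pp" "x - y \<in> (span V)\<^sup>\<bottom>"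
    | u where "u \<in> (span V)\<^sup>\<bottom>\<^sup>\<bottom>" "\<forall>x\<in>Pm. \<forall>y\<in>Pp. u \<bullet> y < u \<bullet> x"
    using convex_hull_differences_meet_subspace_or_separated[OF _ _ _ _ subspace_orthogonal_comp]
    by metis
  then show ?thesis
  proof cases
    case (1 x y)
    obtain u e where "\<forall>x\<in>Pm. u \<bullet> x < e" "\<forall>y\<in>Pp. e < u \<bullet> y"
      using a_sep[OF one] by (auto simp: strictly_lin_sep_in_def Pm_def Pp_def)
    then have "x \<noteq> y"
      using strict_sep_convex_hulls 1 by fastforce
    define w where "w = (x - y) /\<^sub>R norm (x - y)"
    have "norm w = 1" "x - y = norm (x - y) *\<^sub>R w"
      using \<open>x \<noteq> y\<close> by (simp_all add: w_def)
    moreover have "\<forall>i\<in>{2..k}. w \<bullet> v i = 0"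
      using 1(3) span_base[of _ V]
      by (auto simp: w_def orthogonal_comp_def orthogonal_def V_def inner_commute)
    ultimately show ?thesis
      using not_strictly_lin_sep_proj_along[OF 1(1,2)] unfolding Pm_def Pp_def by blast
  next
    case (2 u)
    then have "u \<in> span V"
      by (metis orthogonal_comp_self subspace_span)
    moreover have "1 \<le> k"
      using k_bounds by simp
    ultimately obtain p q where "p \<in> P" "q \<in> P" "a 1 p = -1" "a 1 q = 1" and "u \<bullet> p \<le> u \<bullet> q"
      using labelled_pair_not_separated_by_span[OF _ labels H_sep v_indep(1)] unfolding V_def by blast
    moreover from calculation have "u \<bullet> q < u \<bullet> p"
      using 2(2) unfolding Pm_def Pp_def by blast
    ultimately show ?thesis
      by simp
  qed
qed

end
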